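(* Let $S\subset\mathrm{supp}(\Pi)$ be a set in $\mathcal B_m$ for some level $m$ of the tree decomposition, let $t>0$, and set $h_n=\left\{\Pi(S)\big(t+d\log(n/\Pi(S))\big)/n\right\}^{1/(d+2)}$. Assume (A0)–(A3), $h_n\le 2^{-m}$, and $t+d^2\log(1/h_n)\le nh_n^d$. Let $\widehat f(x;h_n)=\widehat\eta_1(x;h_n,S)-\widehat\eta_{-1}(x;h_n,S)$ be built from $n$ i.i.d. observations of the conditional law of $(X,A,R)$ given $X\in S$. Then with probability at least $1-4e^{-t}$, \[ \sup_{x\in\mathrm{supp}(\Pi)\cap S}|\widehat f(x;h_n)-f^\ast(x)|\le 4Ch_n, \] where $C=C(M,c_1,c_2,L,L_K,\|K\|_\infty,\ell_K,R_K)$ is the constant for which, for every such $S$, every $0<h\le2^{-m}$, $j=\pm1$, and $t>0$ with $t+d^2\log(1/h)\le nh^d$, with probability $\ge1-2e^{-t}$ one has $\sup_{x\in\mathrm{supp}(\Pi)\cap S}|\widehat\eta_j(x;h,S)-\eta_j(x)|\le C\big(h+\sqrt{\Pi(S)(t+d^2\log(1/h))/(nh^d)}\big)$.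
   Context: $(X,A,R)$ is a random triple: $X\in\mathbb R^p$ with known marginal distribution $\Pi$, $A\in\{-1,1\}$ with $P(A=1\mid X)=P(A=-1\mid X)=1/2$, $R$ real. $\eta_j(x)=\mathbb E[R\mid A=j,X=x]$ and $f^\ast=\eta_1-\eta_{-1}$. For measurable $S$, $\Pi_S(\cdot)=\Pi(\cdot\mid X\in S)$. $K_h(u)=K(u/h)/h^p$, $Q_h(x\mid S)=\int K_h(x-y)\,d\Pi_S(y)$, and for i.i.d. $(X^{(i)},A^{(i)},R^{(i)})_{i=1}^n$ from the conditional law given $X\in S$, $\widehat\eta_j(x;h,S)=\frac1n\sum_{i=1}^n\frac{R^{(i)}I\{A^{(i)}=j\}K_h(x-X^{(i)})}{Q_h(x\mid S)P(A^{(i)}=j)}$. Tree decomposition: $\{T_{i,j}\}$ with $T_{1,1}=\mathrm{supp}(\Pi)$, each level a disjoint partition, nested levels, $\mathrm{diam}(T_{i,j})\le K_12^{-i}$, and an integer $1\le d\le p$ and $0<c_1\le c_2$ with $c_1r^d\le\Pi(B(x,r)\cap T_{i,j})\le c_2r^d$ for $0<r\le2^{-i}$, $x\in T_{i,j}$; $\mathcal B_i$ is generated by level-$i$ cells. (A0) $\eta_{\pm1}$ are $L$-Lipschitz. (A1) $|R|\le M$ a.s. (A2) $K\ge0$ compactly supported, $K(x)\le\|K\|_\infty I\{\|x\|_2\le R_K\}$, $L_K$-Lipschitz, $K(x)\ge\ell_KI\{\|x\|_2\le1\}$, $\ell_K>0$. (A3) $\mathrm{supp}(\Pi)$ admits such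 a tree decomposition. *)

theory Defs
  imports "HOL-Probability.Probability"
begin

definition obsX :: "'a \<times> int \<times> real \<Rightarrow> 'a" where "obsX z = fst z"
definition obsA :: "'a \<times> int \<times> real \<Rightarrow> int" where "obsA z = fst (snd z)"
definition obsR :: "'a \<times> int \<times> real \<Rightarrow> real" where "obsR z = snd (snd z)"

definition msupp :: "'a::metric_space measure \<Rightarrow> 'a set" where
  "msupp Pi_X = {x. \<forall>r>0. 0 < emeasure Pi_X (ball x r)}"

text \<open>Tree decomposition of supp(Pi): T i is the set of level-i cells (levels i \<ge> 1).\<close>
definition tree_decomp ::
  "'a::euclidean_space measure \<Rightarrow> (nat \<Rightarrow> 'a set set) \<Rightarrow> nat \<Rightarrow> real \<Rightarrow> real \<Rightarrow> real \<Rightarrow> bool" where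
  "tree_decomp Pi_X T d c1 c2 K1 \<longleftrightarrow>
     T 1 = {msupp Pi_X} \<and>
     (\<forall>i\<ge>1. (\<forall>C\<in>T i. C \<noteq> {} \<and> C \<in> sets Pi_X) \<and> \<Union>(T i) = msupp Pi_X \<and> disjoint (T i)) \<and>
     (\<forall>i\<ge>1. \<forall>C\<in>T (Suc i). \<exists>C'\<in>T i. C \<subseteq> C') \<and>
     (\<forall>i\<ge>1. \<forall>C\<in>T i. diameter C \<le> K1 * (1/2)^i) \<and>
     1 \<le> d \<and> d \<le> DIM('a) \<and> 0 < c1 \<and> c1 \<le> c2 \<and>
     (\<forall>i\<ge>1. \<forall>C\<in>T i. \<forall>x\<in>C. \<forall>r. 0 < r \<and> r \<le> (1/2)^i \<longrightarrow>
         c1 * r^d \<le> measure Pi_X (ball x r \<inter> C) \<and> measure Pi_X (ball x r \<inter> C) \<le> c2 * r^d)"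

definition level_sigma :: "'a::euclidean_space measure \<Rightarrow> (nat \<Rightarrow> 'a set set) \<Rightarrow> nat \<Rightarrow> 'a set set" where
  "level_sigma Pi_X T m = sigma_sets (msupp Pi_X) (T m)"

text \<open>P(A=j | X) = 1/2 and eta j (x) = E[R | A = j, X = x] are expressed through their defining
  integral identities.\<close>
definition model ::
  "('a::euclidean_space \<times> int \<times> real) measure \<Rightarrow> 'a measure \<Rightarrow> (int \<Rightarrow> 'a \<Rightarrow> real) \<Rightarrow> bool" where
  "model D Pi_X \<eta> \<longleftrightarrow>
     prob_space D \<and> sets D = sets borel \<and> prob_space Pi_X \<and> sets Pi_X = sets borel \<and>
     distr D borel obsX = Pi_X \<and>
     (AE z in D. obsA z \<in> {-1, 1}) \<and>
     (\<forall>j\<in>{-1, 1::int}. \<forall>B\<in>sets borel.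
        measure D {z\<in>space D. obsX z \<in> B \<and> obsA z = j} = measure Pi_X B / 2) \<and>
     (\<forall>j\<in>{-1, 1::int}. \<eta> j \<in> borel_measurable borel \<and> integrable Pi_X (\<eta> j) \<and>
        (\<forall>B\<in>sets borel.
          (\<integral>z. indicator {z. obsX z \<in> B \<and> obsA z = j} z * obsR z \<partial>D)
            = (\<integral>x. indicator B x * \<eta> j x \<partial>Pi_X) / 2))"

definition fstar :: "(int \<Rightarrow> 'a \<Rightarrow> real) \<Rightarrow> 'a \<Rightarrow> real" where
  "fstar \<eta> x = \<eta> 1 x - \<eta> (-1) x"

text \<open>(A2) kernel assumptions; the sup-norm of K is its actual supremum.\<close>
definition kernel_ok :: "('a::euclidean_space \<Rightarrow> real) \<Rightarrow> real \<Rightarrow> real \<Rightarrow> real \<Rightarrow> bool" where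
  "kernel_ok K RK LK lK \<longleftrightarrow>
     (\<forall>x. 0 \<le> K x) \<and> bdd_above (range (\<lambda>x. \<bar>K x\<bar>)) \<and>
     (\<forall>x. K x \<le> (SUP y. \<bar>K y\<bar>) * indicator {x. norm x \<le> RK} x) \<and>
     LK-lipschitz_on UNIV K \<and>
     (\<forall>x. lK * indicator {x. norm x \<le> 1} x \<le> K x) \<and> 0 < lK"

definition Kh :: "('a::euclidean_space \<Rightarrow> real) \<Rightarrow> real \<Rightarrow> 'a \<Rightarrow> real" where
  "Kh K h u = K ((1/h) *\<^sub>R u) / h ^ DIM('a)"

definition Qh :: "'a::euclidean_space measure \<Rightarrow> ('a \<Rightarrow> real) \<Rightarrow> real \<Rightarrow> 'a set \<Rightarrow> 'a \<Rightarrow> real" where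
  "Qh Pi_X K h S x = (\<integral>y. Kh K h (x - y) \<partial>(uniform_measure Pi_X S))"

definition cond_law :: "('a \<times> int \<times> real) measure \<Rightarrow> 'a set \<Rightarrow> ('a \<times> int \<times> real) measure" where
  "cond_law D S = uniform_measure D {z\<in>space D. obsX z \<in> S}"

definition sample :: "('a \<times> int \<times> real) measure \<Rightarrow> 'a set \<Rightarrow> nat \<Rightarrow> (nat \<Rightarrow> 'a \<times> int \<times> real) measure" where
  "sample D S n = PiM {..<n} (\<lambda>_. cond_law D S)"

definition etahat ::
  "'a::euclidean_space measure \<Rightarrow> ('a \<times> int \<times> real) measure \<Rightarrow> ('a \<Rightarrow> real) \<Rightarrow> nat \<Rightarrow> real \<Rightarrow> 'a set
    \<Rightarrow> int \<Rightarrow> (nat \<Rightarrow> 'a \<times> int \<times> real) \<Rightarrow> 'a \<Rightarrow> real" where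
  "etahat Pi_X D K n h S j \<omega> x =
     (\<Sum>i<n. obsR (\<omega> i) * (if obsA (\<omega> i) = j then 1 else 0) * Kh K h (x - obsX (\<omega> i))
        / (Qh Pi_X K h S x * measure (cond_law D S) {z\<in>space (cond_law D S). obsA z = j})) / real n"

definition fhat ::
  "'a::euclidean_space measure \<Rightarrow> ('a \<times> int \<times> real) measure \<Rightarrow> ('a \<Rightarrow> real) \<Rightarrow> nat \<Rightarrow> real \<Rightarrow> 'a set
    \<Rightarrow> (nat \<Rightarrow> 'a \<times> int \<times> real) \<Rightarrow> 'a \<Rightarrow> real" where
  "fhat Pi_X D K n h S \<omega> x = etahat Pi_X D K n h S 1 \<omega> x - etahat Pi_X D K n h S (-1) \<omega> x"

definition thmA1_const ::
  "'a::euclidean_space measure \<Rightarrow> ('a \<times> int \<times> real) measure \<Rightarrow> (int \<Rightarrow> 'a \<Rightarrow> real) \<Rightarrow> ('a \<Rightarrow> real)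
    \<Rightarrow> (nat \<Rightarrow> 'a set set) \<Rightarrow> nat \<Rightarrow> nat \<Rightarrow> nat \<Rightarrow> real \<Rightarrow> bool" where
  "thmA1_const Pi_X D \<eta> K T d m n C \<longleftrightarrow>
     (\<forall>S h j t. S \<subseteq> msupp Pi_X \<and> S \<in> level_sigma Pi_X T m \<and> S \<noteq> {} \<and>
        0 < h \<and> h \<le> (1/2)^m \<and> j \<in> {-1, 1} \<and> 0 < t \<and>
        t + real d ^ 2 * ln (1/h) \<le> real n * h ^ d \<longrightarrow>
        (\<exists>E\<in>sets (sample D S n). measure (sample D S n) E \<ge> 1 - 2 * exp (-t) \<and>
           (\<forall>\<omega>\<in>E. \<forall>x\<in>msupp Pi_X \<inter> S.
              \<bar>etahat Pi_X D K n h S j \<omega> x - \<eta> j x\<bar>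
                \<le> C * (h + sqrt (measure Pi_X S * (t + real d ^ 2 * ln (1/h)) / (real n * h ^ d))))))"

end

theory Submission
  imports Defs
begin

text \<open>Both regression estimates satisfy the uniform bound of the preceding theorem at the bandwidth
  \<open>h\<^sub>n\<close>, each with probability at least \<open>1 - 2e\<^sup>-\<^sup>t\<close>; a union bound gives both at once, and the
  error of their difference is at most \<open>2C(h\<^sub>n + s)\<close> with \<open>s\<close> the stochastic term of that theorem.
  The choice of \<open>h\<^sub>n\<close> balances the two terms: it forces \<open>\<Pi>(S)/n \<le> h\<^sub>n\<^sup>d\<close>, hence
  \<open>d log(1/h\<^sub>n) \<le> log(n/\<Pi>(S))\<close>, and then \<open>s \<le> h\<^sub>n\<close>. Assumptions (A0)-(A2) enter only
  through the constant \<open>C\<close>.\<close>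

lemma (in prob_space) prob_Int_ge:
  assumes "A \<in> events" "B \<in> events"
  shows "prob A + prob B - 1 \<le> prob (A \<inter> B)"
proof -
  have "prob (A \<union> B) = prob A + prob B - prob (A \<inter> B)"
    using assms by (intro measure_Un3) (auto simp: fmeasurable_eq_sets)
  then show ?thesis
    using prob_le_1[of "A \<union> B"] by linarith
qed

lemma level_sigma_subset_sets:
  assumes "tree_decomp Pi_X T d c1 c2 K1" "1 \<le> m"
  shows "level_sigma Pi_X T m \<subseteq> sets Pi_X"
  using assms unfolding tree_decomp_def level_sigma_def
  by (intro sets.sigma_sets_subset') auto

lemma prob_space_sample:
  assumes "model D Pi_X \<eta>" "S \<in> sets Pi_X" "measure Pi_X S \<noteq> 0"
  shows "prob_space (sample D S n)"
proof -
  have "prob_space D" and sD: "sets D = sets borel" and "prob_space Pi_X"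
    and sP: "sets Pi_X = sets borel" and distr: "distr D borel obsX = Pi_X"
    using assms(1) unfolding model_def by auto
  interpret D: prob_space D by fact
  interpret PX: prob_space Pi_X by fact
  have "obsX \<in> borel_measurable (borel :: ('a \<times> int \<times> real) measure)"
    unfolding obsX_def by (intro borel_measurable_continuous_onI continuous_intros)
  then have obsX: "obsX \<in> borel_measurable D"
    using measurable_cong_sets[OF sD refl] by blast
  have event: "{z\<in>space D. obsX z \<in> S} = obsX -` S \<inter> space D" by auto
  have "emeasure D {z\<in>space D. obsX z \<in> S} = emeasure (distr D borel obsX) S"
    unfolding event using obsX assms(2) sP by (intro emeasure_distr[symmetric]) auto
  then have "emeasure D {z\<in>space D. obsX z \<in> S} \<noteq> 0"
    using assms(3) distr by (simp add: PX.emeasure_eq_measure)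
  then have "prob_space (cond_law D S)"
    unfolding cond_law_def
    by (intro prob_space_uniform_measure) (simp_all add: D.emeasure_eq_measure)
  then show ?thesis
    unfolding sample_def by (intro prob_space_PiM)
qed

lemma thmA1_constD:
  assumes "thmA1_const Pi_X D \<eta> K T d m n C"
    and "S \<subseteq> msupp Pi_X" "S \<in> level_sigma Pi_X T m" "S \<noteq> {}"
    and "0 < h" "h \<le> (1/2)^m" "j \<in> {-1, 1}" "0 < t"
    and "t + real d ^ 2 * ln (1/h) \<le> real n * h ^ d"
  obtains E where "E \<in> sets (sample D S n)" "1 - 2 * exp (-t) \<le> measure (sample D S n) E"
    "\<And>\<omega> x. \<omega> \<in> E \<Longrightarrow> x \<in> msupp Pi_X \<inter> S \<Longrightarrow>
       \<bar>etahat Pi_X D K n h S j \<omega> x - \<eta> j x\<bar>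
         \<le> C * (h + sqrt (measure Pi_X S * (t + real d ^ 2 * ln (1/h)) / (real n * h ^ d)))"
proof -
  have "\<exists>E\<in>sets (sample D S n). 1 - 2 * exp (-t) \<le> measure (sample D S n) E \<and>
     (\<forall>\<omega>\<in>E. \<forall>x\<in>msupp Pi_X \<inter> S. \<bar>etahat Pi_X D K n h S j \<omega> x - \<eta> j x\<bar>
         \<le> C * (h + sqrt (measure Pi_X S * (t + real d ^ 2 * ln (1/h)) / (real n * h ^ d))))"
    using assms unfolding thmA1_const_def by (elim allE impE) auto
  then show thesis
    using that by blast
qed

lemma ln_2_ge_half: "1/2 \<le> ln (2::real)"
  using ln_le_minus_one[of "1/2::real"] by (simp add: ln_div)

lemma powr_inverse_power:
  fixes b :: real
  assumes "0 < b" "0 < k"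
  shows "(b powr (1 / real k)) ^ k = b"
  using assms by (simp add: powr_realpow[symmetric] powr_powr)

text \<open>The contradiction hypothesis forces \<open>n < 2p \<le> 2\<close>, so integrality of the sample size is used.\<close>

lemma bandwidth_power_ge_mass_ratio:
  fixes p t h :: real and n d :: nat
  assumes p: "0 < p" "p \<le> 1" and n: "0 < n" and d: "1 \<le> d" and t: "0 < t"
    and h: "0 < h" "h \<le> 1/2"
    and h_pow: "h ^ (d+2) = p * (t + real d * ln (real n / p)) / real n"
    and cond: "t + real d ^ 2 * ln (1/h) \<le> real n * h ^ d"
  shows "p / real n \<le> h ^ d"
proof (rule ccontr)
  assume "\<not> p / real n \<le> h ^ d"
  then have small: "h ^ d < p / real n" by simp
  have "h ^ (d+2) = h ^ d * h ^ 2"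
    by (rule power_add)
  also have "\<dots> \<le> h ^ d * (1/4)"
    using h power_mono[OF h(2), of 2] by (intro mult_left_mono) (auto simp: power_divide)
  also have "\<dots> < p / real n * (1/4)"
    using small by simp
  finally have "p / real n * (t + real d * ln (real n / p)) < p / real n * (1/4)"
    unfolding h_pow by (simp add: mult.commute)
  then have "t + real d * ln (real n / p) < 1/4"
    by (rule mult_left_less_imp_less) (use p in simp)
  moreover have "ln (real n / p) \<le> real d * ln (real n / p)"
    using d p n by (simp add: mult_le_cancel_right1)
  ultimately have "ln (real n / p) < ln 2"
    using t ln_2_ge_half by linarith
  then have "real n < 2 * p"
    using p n by (simp add: field_simps)
  then have n_1: "n = 1"
    using p n by linarith
  have "1/2 \<le> ln (2::real)"
    by (rule ln_2_ge_half)
  also have "\<dots> \<le> ln (1/h)"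
    using h by (simp add: field_simps)
  also have "\<dots> \<le> real d ^ 2 * ln (1/h)"
    using d h by (intro mult_le_cancel_right1[THEN iffD2]) (simp add: one_le_power)
  finally have "1/2 \<le> real d ^ 2 * ln (1/h)" .
  moreover have "real n * h ^ d \<le> 1/2"
    using h d power_decreasing[of 1 d h] n_1 by simp
  ultimately show False
    using cond t by linarith
qed

lemma bandwidth_bounds_stochastic_term:
  fixes p t h :: real and n d :: nat
  assumes p: "0 < p" "p \<le> 1" and n: "0 < n" and d: "1 \<le> d" and t: "0 < t"
    and h: "0 < h" "h \<le> 1/2"
    and h_pow: "h ^ (d+2) = p * (t + real d * ln (real n / p)) / real n"
    and cond: "t + real d ^ 2 * ln (1/h) \<le> real n * h ^ d"
  shows "sqrt (p * (t + real d ^ 2 * ln (1/h)) / (real n * h ^ d)) \<le> h"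
proof -
  have "ln (p / real n) \<le> ln (h ^ d)"
    using bandwidth_power_ge_mass_ratio[OF assms] p n by (intro ln_mono) auto
  then have "real d * ln (1/h) \<le> ln (real n / p)"
    using p n h by (simp add: ln_div ln_realpow)
  then have "real d ^ 2 * ln (1/h) \<le> real d * ln (real n / p)"
    unfolding power2_eq_square mult.assoc by (rule mult_left_mono) simp
  then have "p * (t + real d ^ 2 * ln (1/h)) \<le> p * (t + real d * ln (real n / p))"
    using p by (intro mult_left_mono) auto
  also have "\<dots> = real n * h ^ (d+2)"
    unfolding h_pow using n by simp
  also have "\<dots> = (real n * h ^ d) * h ^ 2"
    by (simp add: power_add power2_eq_square)
  finally have "p * (t + real d ^ 2 * ln (1/h)) / (real n * h ^ d) \<le> h ^ 2"
    using n h by (simp add: divide_le_eq mult.commute)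
  then show ?thesis
    using h real_sqrt_le_mono by fastforce
qed

lemma bandwidth_choice:
  fixes p t h :: real and n d :: nat
  assumes p: "0 \<le> p" "p \<le> 1" and n: "0 < n" and d: "1 \<le> d" and t: "0 < t"
    and h_def: "h = (p * (t + real d * ln (real n / p)) / real n) powr (1 / (real d + 2))"
    and h: "h \<le> 1/2"
    and cond: "t + real d ^ 2 * ln (1/h) \<le> real n * h ^ d"
  shows "0 < p" "0 < h"
    and "0 \<le> sqrt (p * (t + real d ^ 2 * ln (1/h)) / (real n * h ^ d))"
    and "sqrt (p * (t + real d ^ 2 * ln (1/h)) / (real n * h ^ d)) \<le> h"
proof -
  show p_pos: "0 < p"
  proof (rule ccontr)
    assume "\<not> 0 < p"
    then show False
      using p h_def cond d t by (simp add: power_0_left)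
  qed
  have base_pos: "0 < p * (t + real d * ln (real n / p)) / real n"
    using p_pos p n t by (simp add: add_pos_nonneg)
  have h_pow: "h ^ (d+2) = p * (t + real d * ln (real n / p)) / real n"
    using powr_inverse_power[OF base_pos, of "d+2"] unfolding h_def by (simp add: add.commute)
  show h_pos: "0 < h"
    unfolding h_def powr_gt_zero using base_pos by linarith
  have "0 \<le> ln (1/h)"
    using h_pos h by simp
  then show "0 \<le> sqrt (p * (t + real d ^ 2 * ln (1/h)) / (real n * h ^ d))"
    using p_pos t n h_pos by simp
  show "sqrt (p * (t + real d ^ 2 * ln (1/h)) / (real n * h ^ d)) \<le> h"
    using bandwidth_bounds_stochastic_term[OF p_pos p(2) n d t h_pos h h_pow cond] .
qed

lemma abs_diff_error_le:
  fixes a a' b b' C h s :: real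
  assumes "\<bar>a - b\<bar> \<le> C * (h + s)" "\<bar>a' - b'\<bar> \<le> C * (h + s)" "0 \<le> s" "s \<le> h"
  shows "\<bar>(a - a') - (b - b')\<bar> \<le> 4 * C * h"
proof -
  have "0 \<le> C * (h + s)"
    using assms(1) abs_ge_zero[of "a - b"] by linarith
  then have "C * (h + s) \<le> C * (2 * h)"
    using assms(3,4) by (cases "h + s = 0") (auto simp: zero_le_mult_iff intro: mult_left_mono)
  then show ?thesis
    using assms(1,2) by linarith
qed

theorem corollaryA1:
  fixes D :: "('a::euclidean_space \<times> int \<times> real) measure"
    and Pi_X :: "'a measure" and \<eta> :: "int \<Rightarrow> 'a \<Rightarrow> real"
    and K :: "'a \<Rightarrow> real" and T :: "nat \<Rightarrow> 'a set set"
    and d m n :: nat and hn c1 c2 K1 L M RK LK lK C t :: real and S :: "'a set"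
  assumes model: "model D Pi_X \<eta>"
    and A0: "\<forall>j\<in>{-1, 1::int}. L-lipschitz_on UNIV (\<eta> j)"
    and A1: "AE z in D. \<bar>obsR z\<bar> \<le> M"
    and A2: "kernel_ok K RK LK lK"
    and A3: "tree_decomp Pi_X T d c1 c2 K1"
    and m: "1 \<le> m" and n: "0 < n"
    and S: "S \<subseteq> msupp Pi_X" "S \<in> level_sigma Pi_X T m" "S \<noteq> {}"
    and t: "0 < t"
    and hn_def: "hn = (measure Pi_X S * (t + real d * ln (real n / measure Pi_X S)) / real n) powr (1 / (real d + 2))"
    and hn_le: "hn \<le> (1/2)^m"
    and cond: "t + real d ^ 2 * ln (1/hn) \<le> real n * hn ^ d"
    and Cprop: "thmA1_const Pi_X D \<eta> K T d m n C"
  shows "\<exists>E\<in>sets (sample D S n). measure (sample D S n) E \<ge> 1 - 4 * exp (-t) \<and>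
           (\<forall>\<omega>\<in>E. \<forall>x\<in>msupp Pi_X \<inter> S. \<bar>fhat Pi_X D K n hn S \<omega> x - fstar \<eta> x\<bar> \<le> 4 * C * hn)"
proof -
  let ?s = "sqrt (measure Pi_X S * (t + real d ^ 2 * ln (1/hn)) / (real n * hn ^ d))"
  have d: "1 \<le> d"
    using A3 unfolding tree_decomp_def by blast
  have mass: "0 \<le> measure Pi_X S" "measure Pi_X S \<le> 1"
    using model unfolding model_def by (auto intro: prob_space.prob_le_1)
  have "hn \<le> 1/2"
    using hn_le m power_decreasing[of 1 m "1/2::real"] by simp
  then have pos: "0 < measure Pi_X S" "0 < hn" and s: "0 \<le> ?s" "?s \<le> hn"
    using bandwidth_choice[OF mass n d t hn_def _ cond] by auto
  interpret P: prob_space "sample D S n"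
    using prob_space_sample[OF model] level_sigma_subset_sets[OF A3 m] S(2) pos by auto
  have j: "(1::int) \<in> {-1, 1}" "(-1::int) \<in> {-1, 1}"
    by auto
  obtain E1 where E1: "E1 \<in> P.events" "1 - 2 * exp (-t) \<le> P.prob E1"
    "\<And>\<omega> x. \<omega> \<in> E1 \<Longrightarrow> x \<in> msupp Pi_X \<inter> S \<Longrightarrow> \<bar>etahat Pi_X D K n hn S 1 \<omega> x - \<eta> 1 x\<bar> \<le> C * (hn + ?s)"
    using thmA1_constD[OF Cprop S pos(2) hn_le j(1) t cond] by blast
  obtain E2 where E2: "E2 \<in> P.events" "1 - 2 * exp (-t) \<le> P.prob E2"
    "\<And>\<omega> x. \<omega> \<in> E2 \<Longrightarrow> x \<in> msupp Pi_X \<inter> S \<Longrightarrow> \<bar>etahat Pi_X D K n hn S (-1) \<omega> x - \<eta> (-1) x\<bar> \<le> C * (hn + ?s)"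
    using thmA1_constD[OF Cprop S pos(2) hn_le j(2) t cond] by blast
  show ?thesis
  proof (intro bexI conjI ballI)
    show "1 - 4 * exp (-t) \<le> P.prob (E1 \<inter> E2)"
      using P.prob_Int_ge[OF E1(1) E2(1)] E1(2) E2(2) by linarith
    show "\<bar>fhat Pi_X D K n hn S \<omega> x - fstar \<eta> x\<bar> \<le> 4 * C * hn"
      if "\<omega> \<in> E1 \<inter> E2" "x \<in> msupp Pi_X \<inter> S" for \<omega> x
    proof -
      from that(1) have "\<omega> \<in> E1" "\<omega> \<in> E2" by auto
      from abs_diff_error_le[OF E1(3)[OF this(1) that(2)] E2(3)[OF this(2) that(2)] s]
      show ?thesis unfolding fhat_def fstar_def .
    qed
  qed (use E1(1) E2(1) in blast)
qed

end
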